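(* Fix $\theta\in(-\frac{\pi}{2},\frac{\pi}{2})$ and let $P_t^{\theta}$, $t\ge 0$, be the complex Ornstein-Uhlenbeck semigroup defined below. Then for every $t\ge0$ and every $\phi\in C_b(\mathbb{R}^2)$, $$P_t^{\theta}(P_t^{\theta})^*\phi=(P_t^{\theta})^*P_t^{\theta}\phi,$$ where $(P_t^{\theta})^*$ is the adjoint of $P_t^{\theta}$ in $L^2(\gamma)$. Furthermore, when restricted to $C_b(\mathbb{R}^2)$, $(P_t^{\theta})^*=P_t^{-\theta}$.
   Context: Identify $\mathbb{R}^2$ with $\mathbb{C}$ via $(y_1,y_2)\mapsto y_1+\mathrm{i}y_2$. Let $\gamma$ be the standard Gaussian measure $d\gamma(y)=\frac{1}{2\pi}e^{-(y_1^2+y_2^2)/2}\,dy_1\,dy_2$, and $L^2(\gamma)$ the complex Hilbert space with inner product $\langle f,g\rangle=\int f\bar g\,d\gamma$. $C_b(\mathbb{R}^2)$ is the space of bounded continuous complex-valued functions on $\mathbb{R}^2$. For $\varphi\in C_b(\mathbb{R}^2)$, $t\ge0$ and $x\in\mathbb{C}$, $$P_t^{\theta}\varphi(x)=\int_{\mathbb{C}}\varphi\big(e^{-(\cos\theta+\mathrm{i}\sin\theta)t}x+\sqrt{1-e^{-2t\cos\theta}}\,y\big)\,d\gamma(y)$$ (the transition semigroup of the complex Ornstein-Uhlenbeck process $dZ_t=-e^{\mathrm{i}\theta}Z_t\,dt+\sqrt{2\cos\theta}\,d\zeta_t$, $\zeta$ a complex Brownian motion). $P_t^\theta$ is a contraction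 in $L^2(\gamma)$ norm on $C_b(\mathbb{R}^2)$ and extends uniquely to a bounded operator on $L^2(\gamma)$, whose adjoint is $(P_t^\theta)^*$. *)

theory Defs
  imports "HOL-Analysis.Analysis"
begin

definition gauss :: "complex measure" where
  "gauss = density lborel (\<lambda>y. ennreal (exp (- (cmod y)\<^sup>2 / 2) / (2 * pi)))"

definition Cb :: "(complex \<Rightarrow> complex) set" where
  "Cb = {\<phi>. continuous_on UNIV \<phi> \<and> bounded (range \<phi>)}"

definition L2g :: "(complex \<Rightarrow> complex) set" where
  "L2g = {f. f \<in> borel_measurable gauss \<and> integrable gauss (\<lambda>x. (cmod (f x))\<^sup>2)}"

definition inner_g :: "(complex \<Rightarrow> complex) \<Rightarrow> (complex \<Rightarrow> complex) \<Rightarrow> complex" where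
  "inner_g f g = (\<integral>x. f x * cnj (g x) \<partial>gauss)"

definition OU :: "real \<Rightarrow> real \<Rightarrow> (complex \<Rightarrow> complex) \<Rightarrow> complex \<Rightarrow> complex" where
  "OU \<theta> t \<phi> x = (\<integral>y. \<phi> (exp (- (cis \<theta> * complex_of_real t)) * x
        + complex_of_real (sqrt (1 - exp (- 2 * t * cos \<theta>))) * y) \<partial>gauss)"

text \<open>The L^2(gamma)-adjoint of OU theta t applied to phi: the (a.e.-unique, since C_b is
  dense in L^2(gamma) and OU theta t is bounded) element g of L^2(gamma) with
  <OU theta t psi, phi> = <psi, g> for all psi in C_b.\<close>
definition OU_adj :: "real \<Rightarrow> real \<Rightarrow> (complex \<Rightarrow> complex) \<Rightarrow> complex \<Rightarrow> complex" where
  "OU_adj \<theta> t \<phi> = (SOME g. g \<in> L2g \<and>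
      (\<forall>\<psi>\<in>Cb. inner_g (OU \<theta> t \<psi>) \<phi> = inner_g \<psi> g))"

end

theory Submission
  imports Defs "HOL-Probability.Probability"
begin

(* Write P_t^theta phi(x) = int phi(a x + c y) dgamma(y) with a = exp(-e^(i theta) t) and
   c = sqrt(1 - exp(-2 t cos theta)). Then |a|^2 + c^2 = 1, and P_t^(-theta) is the same
   operator with a replaced by its conjugate.
   By Fubini, <P_t^theta psi, phi> and <psi, P_t^(-theta) phi> are integrals over gamma x gamma
   that differ by the unitary change of variables (x, y) |-> (a x + c y, c x - conj a y); as bounded
   continuous functions separate L^2(gamma), the adjoint is P_t^(-theta). Likewise
   P_t^theta P_t^(-theta) phi(x) and P_t^(-theta) P_t^theta phi(x) integrate
   phi(|a|^2 x + c (conj a y + y')) and phi(|a|^2 x + c (a y + y')), which are again related by a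
   unitary map of C^2. Invariance of gamma x gamma under unitary maps comes from the radial density
   and the invariance of Lebesgue measure under SL_2(C), which is generated by shears. *)

section \<open>The standard Gaussian measure on the complex plane\<close>

definition gauss_pdf :: "complex \<Rightarrow> real" where
  "gauss_pdf y = exp (- (cmod y)\<^sup>2 / 2) / (2 * pi)"

lemma gauss_pdf_pos: "0 < gauss_pdf y"
  by (simp add: gauss_pdf_def)

lemma borel_measurable_gauss_pdf[measurable]: "gauss_pdf \<in> borel_measurable borel"
  unfolding gauss_pdf_def by measurable

lemma gauss_eq_density: "gauss = density lborel (\<lambda>y. ennreal (gauss_pdf y))"
  by (simp add: gauss_def gauss_pdf_def)

lemma sets_gauss[simp, measurable_cong]: "sets gauss = sets borel"
  by (simp add: gauss_def)

lemma measurable_gauss_iff: "f \<in> borel_measurable gauss \<longleftrightarrow> f \<in> borel_measurable borel"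
  by (simp cong: measurable_cong_sets)

lemma gauss_pdf_Complex: "gauss_pdf (Complex a b) = std_normal_density a * std_normal_density b"
proof -
  have "(cmod (Complex a b))\<^sup>2 = a\<^sup>2 + b\<^sup>2"
    by (simp add: cmod_power2)
  moreover have "(1 / sqrt (2 * pi)) * (1 / sqrt (2 * pi)) = 1 / (2 * pi)"
    by simp
  ultimately show ?thesis
    unfolding gauss_pdf_def std_normal_density_def
    by (simp add: field_simps exp_add[symmetric] exp_diff)
qed

lemma measurable_Complex_pair[measurable]:
  "(\<lambda>(a::real, b::real). Complex a b) \<in> lborel \<Otimes>\<^sub>M lborel \<rightarrow>\<^sub>M borel"
  unfolding case_prod_beta' Complex_eq by measurable

lemma distr_Complex_lborel:
  "distr (lborel \<Otimes>\<^sub>M lborel) borel (\<lambda>(a::real, b::real). Complex a b) = lborel"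
proof (rule lborel_eqI[symmetric])
  fix l u :: complex
  assume le: "\<And>b. b \<in> Basis \<Longrightarrow> l \<bullet> b \<le> u \<bullet> b"
  have "(\<lambda>(a, b). Complex a b) -` box l u \<inter> space (lborel \<Otimes>\<^sub>M lborel)
      = {Re l<..<Re u} \<times> {Im l<..<Im u}"
    by (auto simp: box_def Basis_complex_def space_pair_measure)
  moreover have "Re l \<le> Re u" "Im l \<le> Im u"
    using le[of 1] le[of \<i>] by (auto simp: Basis_complex_def)
  ultimately show "emeasure (distr (lborel \<Otimes>\<^sub>M lborel) borel (\<lambda>(a, b). Complex a b)) (box l u)
      = (\<Prod>b\<in>Basis. (u - l) \<bullet> b)"
    by (simp add: emeasure_distr lborel.emeasure_pair_measure_Times Basis_complex_def ennreal_mult)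
qed simp

lemma prob_space_gauss: "prob_space gauss"
proof
  have "emeasure gauss (space gauss) = (\<integral>\<^sup>+ z. gauss_pdf z \<partial>lborel)"
    by (simp add: gauss_eq_density emeasure_density)
  also have "\<dots> = (\<integral>\<^sup>+ z. gauss_pdf z \<partial>distr (lborel \<Otimes>\<^sub>M lborel) borel (\<lambda>(a, b). Complex a b))"
    by (simp add: distr_Complex_lborel)
  also have "\<dots> = (\<integral>\<^sup>+ a. \<integral>\<^sup>+ b. ennreal (std_normal_density a) * ennreal (std_normal_density b)
      \<partial>lborel \<partial>lborel)"
    by (subst nn_integral_distr, simp, simp, subst lborel.nn_integral_fst[symmetric])
      (auto simp: gauss_pdf_Complex ennreal_mult normal_density_nonneg)
  also have "\<dots> = 1"
    by (simp add: nn_integral_cmult nn_integral_eq_integral normal_density_nonneg)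
  finally show "emeasure gauss (space gauss) = 1" .
qed

interpretation gauss: prob_space gauss
  by (rule prob_space_gauss)

section \<open>Complex linear maps of determinant one preserve Lebesgue measure on C^2\<close>

abbreviation lborel2 :: "(complex \<times> complex) measure" where
  "lborel2 \<equiv> lborel \<Otimes>\<^sub>M lborel"

definition mat2 :: "complex \<Rightarrow> complex \<Rightarrow> complex \<Rightarrow> complex \<Rightarrow> complex \<times> complex \<Rightarrow> complex \<times> complex"
  where "mat2 p q r s z = (p * fst z + q * snd z, r * fst z + s * snd z)"

lemma measurable_mat2[measurable]: "mat2 p q r s \<in> lborel2 \<rightarrow>\<^sub>M lborel2"
  unfolding mat2_def by measurable

lemma mat2_comp:
  "mat2 p q r s \<circ> mat2 p' q' r' s'
    = mat2 (p * p' + q * r') (p * q' + q * s') (r * p' + s * r') (r * q' + s * s')"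
  by (auto simp: mat2_def fun_eq_iff algebra_simps)

definition preserves_lborel2 :: "complex \<Rightarrow> complex \<Rightarrow> complex \<Rightarrow> complex \<Rightarrow> bool" where
  "preserves_lborel2 p q r s \<longleftrightarrow> distr lborel2 lborel2 (mat2 p q r s) = lborel2"

lemma preserves_lborel2_mult:
  assumes "preserves_lborel2 p q r s" "preserves_lborel2 p' q' r' s'"
    and "P = p * p' + q * r'" "Q = p * q' + q * s'" "R = r * p' + s * r'" "S = r * q' + s * s'"
  shows "preserves_lborel2 P Q R S"
proof -
  have "distr lborel2 lborel2 (mat2 p q r s \<circ> mat2 p' q' r' s')
      = distr (distr lborel2 lborel2 (mat2 p' q' r' s')) lborel2 (mat2 p q r s)"
    by (subst distr_distr) auto
  also have "\<dots> = lborel2"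
    using assms(1,2) by (simp add: preserves_lborel2_def)
  finally show ?thesis
    by (simp add: preserves_lborel2_def mat2_comp assms(3-6))
qed

lemma preserves_lborel2_swap: "preserves_lborel2 0 1 1 0"
proof -
  have "mat2 0 1 1 0 = (\<lambda>(x, y). (y, x))"
    by (auto simp: mat2_def fun_eq_iff)
  then show ?thesis
    by (simp add: preserves_lborel2_def flip: lborel_pair.distr_pair_swap)
qed

lemma preserves_lborel2_shear: "preserves_lborel2 1 k 0 1"
  unfolding preserves_lborel2_def
proof (rule measure_eqI)
  fix A assume "A \<in> sets (distr lborel2 lborel2 (mat2 1 k 0 1))"
  then have A[measurable]: "A \<in> sets lborel2" by simp
  have "emeasure (distr lborel2 lborel2 (mat2 1 k 0 1)) A
      = (\<integral>\<^sup>+ z. indicator A z \<partial>distr lborel2 lborel2 (mat2 1 k 0 1))"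
    using A by simp
  also have "\<dots> = (\<integral>\<^sup>+ z. indicator A (mat2 1 k 0 1 z) \<partial>lborel2)"
    by (simp add: nn_integral_distr)
  also have "\<dots> = (\<integral>\<^sup>+ y. \<integral>\<^sup>+ x. indicator A (k * y + x, y) \<partial>lborel \<partial>lborel)"
    by (subst lborel_pair.nn_integral_snd[symmetric]) (auto simp: mat2_def add.commute)
  also have "\<dots> = (\<integral>\<^sup>+ y. \<integral>\<^sup>+ x. indicator A (x, y) \<partial>lborel \<partial>lborel)"
  proof (rule nn_integral_cong)
    fix y :: complex
    have "(\<integral>\<^sup>+ x. indicator A (k * y + x, y) \<partial>lborel)
        = (\<integral>\<^sup>+ x. indicator A (x, y) \<partial>distr lborel borel ((+) (k * y)))"
      by (subst nn_integral_distr) auto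
    then show "(\<integral>\<^sup>+ x. indicator A (k * y + x, y) \<partial>lborel) = (\<integral>\<^sup>+ x. indicator A (x, y) \<partial>lborel)"
      by (simp add: lborel_distr_plus)
  qed
  also have "\<dots> = (\<integral>\<^sup>+ z. indicator A z \<partial>lborel2)"
    by (subst lborel_pair.nn_integral_snd[symmetric]) auto
  also have "\<dots> = emeasure lborel2 A"
    using A by simp
  finally show "emeasure (distr lborel2 lborel2 (mat2 1 k 0 1)) A = emeasure lborel2 A" .
qed simp

lemma preserves_lborel2_lower_shear: "preserves_lborel2 1 0 k 1"
proof -
  have "preserves_lborel2 0 1 1 k"
    by (rule preserves_lborel2_mult[OF preserves_lborel2_swap preserves_lborel2_shear]) auto
  then show ?thesis
    by (rule preserves_lborel2_mult[OF _ preserves_lborel2_swap]) auto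
qed

lemma preserves_lborel2_diag:
  assumes "p \<noteq> 0"
  shows "preserves_lborel2 p 0 0 (1 / p)"
proof -
  have "preserves_lborel2 0 p (- 1 / p) 1"
    by (rule preserves_lborel2_mult[OF preserves_lborel2_shear[of p] preserves_lborel2_lower_shear])
      (use assms in auto)
  then have rot_p: "preserves_lborel2 0 p (- 1 / p) 0"
    by (rule preserves_lborel2_mult[OF _ preserves_lborel2_shear[of p]]) (use assms in auto)
  have "preserves_lborel2 0 (- 1) 1 1"
    by (rule preserves_lborel2_mult[OF preserves_lborel2_shear[of "- 1"] preserves_lborel2_lower_shear])
      auto
  then have rot_1: "preserves_lborel2 0 (- 1) 1 0"
    by (rule preserves_lborel2_mult[OF _ preserves_lborel2_shear[of "- 1"]]) auto
  show ?thesis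
    by (rule preserves_lborel2_mult[OF rot_p rot_1]) (use assms in auto)
qed

lemma preserves_lborel2_det_1:
  assumes det: "p * s - q * r = 1"
  shows "preserves_lborel2 p q r s"
proof -
  have upper_left_nonzero: "preserves_lborel2 p q r s" if "p \<noteq> 0" "p * s - q * r = 1" for p q r s
  proof -
    have upper: "preserves_lborel2 p q 0 (1 / p)"
      by (rule preserves_lborel2_mult[OF preserves_lborel2_diag[OF \<open>p \<noteq> 0\<close>]
          preserves_lborel2_shear[of "q / p"]])
        (use that in auto)
    have s: "s = (1 + q * r) / p"
      using that by (simp add: field_simps)
    show ?thesis
      by (rule preserves_lborel2_mult[OF preserves_lborel2_lower_shear[of "r / p"] upper])
        (use that s in \<open>auto simp: field_simps\<close>)
  qed
  show ?thesis
  proof (cases "p = 0")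
    case True
    then have "preserves_lborel2 (p - r) (q - s) r s"
      using det by (intro upper_left_nonzero) (auto simp: algebra_simps)
    then show ?thesis
      by (rule preserves_lborel2_mult[OF preserves_lborel2_shear[of 1]]) auto
  qed (use upper_left_nonzero det in blast)
qed

section \<open>Unitary invariance of the product Gaussian measure\<close>

abbreviation gauss2 :: "(complex \<times> complex) measure" where
  "gauss2 \<equiv> gauss \<Otimes>\<^sub>M gauss"

interpretation gauss2: pair_prob_space gauss gauss
  by (simp add: pair_prob_space_def pair_sigma_finite_def prob_space_gauss prob_space_imp_sigma_finite)

lemma gauss2_eq_density:
  "gauss2 = density lborel2 (\<lambda>z. ennreal (gauss_pdf (fst z) * gauss_pdf (snd z)))"
proof -
  have "gauss2 = density lborel2 (\<lambda>(x, y). ennreal (gauss_pdf x) * ennreal (gauss_pdf y))"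
    unfolding gauss_eq_density
    by (rule pair_measure_density)
      (auto intro: sigma_finite_lborel prob_space_imp_sigma_finite prob_space_gauss[unfolded gauss_eq_density])
  also have "(\<lambda>(x, y). ennreal (gauss_pdf x) * ennreal (gauss_pdf y))
      = (\<lambda>z. ennreal (gauss_pdf (fst z) * gauss_pdf (snd z)))"
    by (auto simp: fun_eq_iff ennreal_mult gauss_pdf_pos less_imp_le)
  finally show ?thesis .
qed

lemma gauss_pdf_mult_unitary:
  assumes "(cmod a)\<^sup>2 + (cmod b)\<^sup>2 = 1"
  shows "gauss_pdf (a * x - cnj b * y) * gauss_pdf (b * x + cnj a * y) = gauss_pdf x * gauss_pdf y"
proof -
  have "(cmod (a * x - cnj b * y))\<^sup>2 + (cmod (b * x + cnj a * y))\<^sup>2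
      = ((cmod a)\<^sup>2 + (cmod b)\<^sup>2) * ((cmod x)\<^sup>2 + (cmod y)\<^sup>2)"
    unfolding cmod_power2 by (simp add: power2_eq_square algebra_simps)
  then have "(cmod (a * x - cnj b * y))\<^sup>2 + (cmod (b * x + cnj a * y))\<^sup>2 = (cmod x)\<^sup>2 + (cmod y)\<^sup>2"
    using assms by simp
  then show ?thesis
    unfolding gauss_pdf_def by (simp add: divide_simps flip: exp_add)
qed

lemma distr_gauss2_unitary:
  assumes ab: "(cmod a)\<^sup>2 + (cmod b)\<^sup>2 = 1"
  shows "distr gauss2 gauss2 (mat2 a (- cnj b) b (cnj a)) = gauss2"
proof -
  define U where "U = mat2 a (- cnj b) b (cnj a)"
  define g where "g = (\<lambda>z. ennreal (gauss_pdf (fst z) * gauss_pdf (snd z)))"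
  have [measurable]: "g \<in> borel_measurable lborel2" "U \<in> lborel2 \<rightarrow>\<^sub>M lborel2"
    unfolding g_def U_def by measurable
  have "a * cnj a - (- cnj b) * b = complex_of_real ((cmod a)\<^sup>2 + (cmod b)\<^sup>2)"
    by (simp add: complex_mult_cnj cmod_power2 mult.commute)
  then have "preserves_lborel2 a (- cnj b) b (cnj a)"
    using ab by (intro preserves_lborel2_det_1) simp
  then have U_lborel2: "distr lborel2 lborel2 U = lborel2"
    by (simp add: preserves_lborel2_def U_def)
  have g_U: "g (U z) = g z" for z
    using gauss_pdf_mult_unitary[OF ab] by (simp add: g_def U_def mat2_def)
  have "distr gauss2 gauss2 U = distr (density lborel2 (\<lambda>z. g (U z))) lborel2 U"
    by (intro distr_cong) (simp_all add: gauss2_eq_density g_U flip: g_def)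
  also have "\<dots> = density (distr lborel2 lborel2 U) g"
    by (rule density_distr[symmetric]) measurable
  also have "\<dots> = gauss2"
    by (simp add: U_lborel2 gauss2_eq_density g_def)
  finally show ?thesis
    by (simp add: U_def)
qed

lemma integral_gauss2_unitary:
  fixes F :: "complex \<times> complex \<Rightarrow> 'b::{banach, second_countable_topology}"
  assumes "(cmod a)\<^sup>2 + (cmod b)\<^sup>2 = 1" and [measurable]: "F \<in> borel_measurable gauss2"
  shows "(\<integral>z. F (mat2 a (- cnj b) b (cnj a) z) \<partial>gauss2) = integral\<^sup>L gauss2 F"
proof -
  have [measurable]: "mat2 a (- cnj b) b (cnj a) \<in> gauss2 \<rightarrow>\<^sub>M gauss2"
    using measurable_mat2 by (simp cong: measurable_cong_sets)
  have "(\<integral>z. F (mat2 a (- cnj b) b (cnj a) z) \<partial>gauss2)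
      = (\<integral>z. F z \<partial>distr gauss2 gauss2 (mat2 a (- cnj b) b (cnj a)))"
    by (rule integral_distr[symmetric]) auto
  then show ?thesis
    by (simp add: distr_gauss2_unitary[OF assms(1)])
qed

lemma integral_gauss2_swap:
  fixes F :: "complex \<times> complex \<Rightarrow> 'b::{banach, second_countable_topology}"
  assumes [measurable]: "F \<in> borel_measurable gauss2"
  shows "(\<integral>z. F (snd z, fst z) \<partial>gauss2) = integral\<^sup>L gauss2 F"
proof -
  have "(\<integral>z. F (snd z, fst z) \<partial>gauss2) = (\<integral>z. F z \<partial>distr gauss2 gauss2 (\<lambda>(x, y). (y, x)))"
    by (subst integral_distr) (auto simp: case_prod_beta')
  then show ?thesis
    by (simp flip: gauss2.distr_pair_swap)
qed

lemma integral_gauss2_iterated: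
  fixes F :: "complex \<times> complex \<Rightarrow> complex"
  assumes [measurable]: "F \<in> borel_measurable gauss2" and "\<And>z. cmod (F z) \<le> B"
  shows "(\<integral>x. \<integral>y. F (x, y) \<partial>gauss \<partial>gauss) = integral\<^sup>L gauss2 F"
  by (rule gauss2.integral_fst'[OF gauss2.integrable_const_bound[where B = B]]) (use assms in auto)

section \<open>Mehler-type operators\<close>

lemma borel_measurable_cnj[measurable]: "cnj \<in> borel_measurable borel"
  by (intro borel_measurable_continuous_onI continuous_intros)

definition bounded_borel :: "(complex \<Rightarrow> complex) \<Rightarrow> bool" where
  "bounded_borel f \<longleftrightarrow> f \<in> borel_measurable borel \<and> bounded (range f)"

lemma bounded_borel_measurable:
  "bounded_borel f \<Longrightarrow> f \<in> borel_measurable borel"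
  by (simp add: bounded_borel_def)

lemma bounded_borel_normE:
  assumes "bounded_borel f"
  obtains B where "0 < B" "\<And>x. cmod (f x) \<le> B"
  using assms by (auto simp: bounded_borel_def bounded_pos)

lemma Cb_bounded_borel: "\<phi> \<in> Cb \<Longrightarrow> bounded_borel \<phi>"
  by (auto simp: Cb_def bounded_borel_def intro: borel_measurable_continuous_onI)

definition mehler :: "complex \<Rightarrow> real \<Rightarrow> (complex \<Rightarrow> complex) \<Rightarrow> complex \<Rightarrow> complex" where
  "mehler a c f x = (\<integral>y. f (a * x + complex_of_real c * y) \<partial>gauss)"

lemma OU_eq_mehler:
  "OU \<theta> t = mehler (exp (- (cis \<theta> * complex_of_real t))) (sqrt (1 - exp (- 2 * t * cos \<theta>)))"
  by (simp add: fun_eq_iff OU_def mehler_def)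

lemma borel_measurable_mehler[measurable]:
  assumes [measurable]: "f \<in> borel_measurable borel"
  shows "mehler a c f \<in> borel_measurable borel"
  unfolding mehler_def[abs_def] by measurable

lemma bounded_borel_mehler:
  assumes "bounded_borel f"
  shows "bounded_borel (mehler a c f)"
proof -
  obtain B where B: "\<And>x. cmod (f x) \<le> B"
    using bounded_borel_normE[OF assms] by blast
  have [measurable]: "f \<in> borel_measurable borel"
    using assms by (rule bounded_borel_measurable)
  have "cmod (mehler a c f x) \<le> B" for x
  proof -
    have int: "integrable gauss (\<lambda>y. f (a * x + complex_of_real c * y))"
      using B by (intro gauss.integrable_const_bound[where B = B]) (auto simp: measurable_gauss_iff)
    have "cmod (mehler a c f x) \<le> (\<integral>y. cmod (f (a * x + complex_of_real c * y)) \<partial>gauss)"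
      unfolding mehler_def by (rule integral_norm_bound)
    also have "\<dots> \<le> B"
      using int B by (intro gauss.integral_le_const) auto
    finally show ?thesis .
  qed
  then show ?thesis
    using assms by (auto simp: bounded_borel_def bounded_iff)
qed

lemma mehler_adjoint:
  assumes "bounded_borel \<psi>" "bounded_borel \<phi>" and ac: "(cmod a)\<^sup>2 + c\<^sup>2 = 1"
  shows "inner_g (mehler a c \<psi>) \<phi> = inner_g \<psi> (mehler (cnj a) c \<phi>)"
proof -
  obtain B1 where "\<And>x. cmod (\<psi> x) \<le> B1"
    using bounded_borel_normE[OF assms(1)] by blast
  moreover obtain B2 where "0 < B2" "\<And>x. cmod (\<phi> x) \<le> B2"
    using bounded_borel_normE[OF assms(2)] by blast
  ultimately have bound: "cmod (\<psi> u * cnj (\<phi> v)) \<le> B1 * B2" for u v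
    unfolding norm_mult complex_mod_cnj by (meson mult_mono' norm_ge_zero order_trans)
  have [measurable]: "\<psi> \<in> borel_measurable borel" "\<phi> \<in> borel_measurable borel"
    using assms(1,2) by (auto intro: bounded_borel_measurable)
  define F1 where "F1 z = \<psi> (a * fst z + of_real c * snd z) * cnj (\<phi> (fst z))" for z
  define F2 where "F2 z = \<psi> (fst z) * cnj (\<phi> (cnj a * fst z + of_real c * snd z))" for z
  have [measurable]: "F1 \<in> borel_measurable gauss2" "F2 \<in> borel_measurable gauss2"
    unfolding F1_def F2_def by measurable
  have lhs: "inner_g (mehler a c \<psi>) \<phi> = integral\<^sup>L gauss2 F1"
    unfolding inner_g_def mehler_def
    by (subst integral_gauss2_iterated[symmetric, where B = "B1 * B2"]) (auto simp: F1_def bound)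
  have rhs: "inner_g \<psi> (mehler (cnj a) c \<phi>) = integral\<^sup>L gauss2 F2"
    unfolding inner_g_def mehler_def
    by (subst integral_gauss2_iterated[symmetric, where B = "B1 * B2"]) (auto simp: F2_def bound)
  have "cnj a * a + of_real c * of_real c = complex_of_real ((cmod a)\<^sup>2 + c\<^sup>2)"
    unfolding of_real_add complex_norm_square by (simp add: power2_eq_square mult.commute)
  then have unit_sum: "cnj a * a + of_real c * of_real c = 1"
    using ac by simp
  have inverse: "cnj a * (a * x + c * y) + c * (c * x - cnj a * y) = x" for x y :: complex
  proof -
    have "cnj a * (a * x + c * y) + c * (c * x - cnj a * y) = (cnj a * a + c * c) * x"
      by (simp add: algebra_simps)
    then show ?thesis
      by (simp add: unit_sum)
  qed
  have unit: "(cmod (complex_of_real c))\<^sup>2 + (cmod a)\<^sup>2 = 1"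
    using ac by simp
  have "integral\<^sup>L gauss2 F2 = (\<integral>z. F2 (snd z, fst z) \<partial>gauss2)"
    by (rule integral_gauss2_swap[symmetric]) simp
  also have "\<dots> = (\<integral>z. F2 (snd (mat2 c (- cnj a) a c z), fst (mat2 c (- cnj a) a c z)) \<partial>gauss2)"
    using integral_gauss2_unitary[OF unit, of "\<lambda>z. F2 (snd z, fst z)"] by simp
  also have "\<dots> = integral\<^sup>L gauss2 F1"
    by (rule Bochner_Integration.integral_cong) (simp_all add: F1_def F2_def mat2_def inverse)
  finally show ?thesis
    using lhs rhs by simp
qed

lemma unitary_row_cnj:
  fixes a :: complex
  obtains u v where "(cmod u)\<^sup>2 + (cmod v)\<^sup>2 = 1" "cnj a * u + v = a" "cnj u - cnj a * cnj v = 1"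
proof
  define n where "n = 1 + a * cnj a"
  have n_real: "n = complex_of_real (1 + (cmod a)\<^sup>2)"
    unfolding n_def complex_norm_square[symmetric] by simp
  have "0 < 1 + (cmod a)\<^sup>2"
    by (simp add: add_pos_nonneg)
  then have n: "n \<noteq> 0" "cnj n = n"
    unfolding n_real by (metis of_real_eq_0_iff less_irrefl) simp
  have "cnj a * ((1 + a\<^sup>2) / n) + (a - cnj a) / n = (cnj a * (1 + a\<^sup>2) + (a - cnj a)) / n"
    by (simp only: add_divide_distrib[symmetric] times_divide_eq_right)
  also have "cnj a * (1 + a\<^sup>2) + (a - cnj a) = a * n"
    by (simp add: n_def algebra_simps power2_eq_square)
  finally show "cnj a * ((1 + a\<^sup>2) / n) + (a - cnj a) / n = a"
    using n by simp
  have "cnj ((1 + a\<^sup>2) / n) - cnj a * cnj ((a - cnj a) / n)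
      = ((1 + (cnj a)\<^sup>2) - cnj a * (cnj a - a)) / n"
    using n by (simp add: field_simps)
  also have "(1 + (cnj a)\<^sup>2) - cnj a * (cnj a - a) = n"
    by (simp add: n_def algebra_simps power2_eq_square)
  finally show "cnj ((1 + a\<^sup>2) / n) - cnj a * cnj ((a - cnj a) / n) = 1"
    using n by simp
  have num: "(1 + a\<^sup>2) * (1 + (cnj a)\<^sup>2) + (a - cnj a) * (cnj a - a) = n * n"
    by (simp add: n_def algebra_simps power2_eq_square)
  have "complex_of_real ((cmod ((1 + a\<^sup>2) / n))\<^sup>2 + (cmod ((a - cnj a) / n))\<^sup>2)
      = ((1 + a\<^sup>2) * (1 + (cnj a)\<^sup>2) + (a - cnj a) * (cnj a - a)) / (n * n)"
    unfolding of_real_add complex_norm_square using n by (simp add: field_simps)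
  also have "\<dots> = 1"
    using n by (simp add: num)
  finally show "(cmod ((1 + a\<^sup>2) / n))\<^sup>2 + (cmod ((a - cnj a) / n))\<^sup>2 = 1"
    by (metis of_real_eq_1_iff)
qed

lemma mehler_mehler_cnj_commute:
  assumes "bounded_borel \<phi>"
  shows "mehler a c (mehler (cnj a) c \<phi>) x = mehler (cnj a) c (mehler a c \<phi>) x"
proof -
  obtain B where B: "\<And>x. cmod (\<phi> x) \<le> B"
    using bounded_borel_normE[OF assms] by blast
  have [measurable]: "\<phi> \<in> borel_measurable borel"
    using assms by (rule bounded_borel_measurable)
  define H1 where "H1 z = \<phi> (cnj a * (a * x + of_real c * fst z) + of_real c * snd z)" for z
  define H2 where "H2 z = \<phi> (a * (cnj a * x + of_real c * fst z) + of_real c * snd z)" for z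
  have [measurable]: "H1 \<in> borel_measurable gauss2" "H2 \<in> borel_measurable gauss2"
    unfolding H1_def H2_def by measurable
  have lhs: "mehler a c (mehler (cnj a) c \<phi>) x = integral\<^sup>L gauss2 H1"
    unfolding mehler_def by (subst integral_gauss2_iterated[symmetric, where B = B]) (auto simp: H1_def B)
  have rhs: "mehler (cnj a) c (mehler a c \<phi>) x = integral\<^sup>L gauss2 H2"
    unfolding mehler_def by (subst integral_gauss2_iterated[symmetric, where B = B]) (auto simp: H2_def B)
  (* The noises conj a y + y' of H1 and a y + y' of H2 are exchanged by a unitary map. *)
  obtain u v where uv: "(cmod u)\<^sup>2 + (cmod v)\<^sup>2 = 1" "cnj a * u + v = a" "cnj u - cnj a * cnj v = 1"
    using unitary_row_cnj .
  have "H1 (mat2 u (- cnj v) v (cnj u) z) = H2 z" for z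
  proof -
    have "cnj a * (a * x + of_real c * (u * fst z - cnj v * snd z)) + of_real c * (v * fst z + cnj u * snd z)
        = cnj a * a * x + of_real c * ((cnj a * u + v) * fst z + (cnj u - cnj a * cnj v) * snd z)"
      by (simp add: algebra_simps)
    also have "\<dots> = a * (cnj a * x + of_real c * fst z) + of_real c * snd z"
      unfolding uv(2,3) by (simp add: algebra_simps)
    finally show ?thesis
      by (simp add: H1_def H2_def mat2_def)
  qed
  then have "integral\<^sup>L gauss2 H1 = integral\<^sup>L gauss2 H2"
    using integral_gauss2_unitary[OF uv(1), of H1] by simp
  then show ?thesis
    using lhs rhs by simp
qed

lemma mehler_cong_AE:
  assumes "c \<noteq> 0" and [measurable]: "g \<in> borel_measurable borel" "h \<in> borel_measurable borel"
    and "AE z in gauss. g z = h z"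
  shows "mehler a c g x = mehler a c h x"
proof -
  define T where "T y = a * x + c *\<^sub>R y" for y :: complex
  have [measurable]: "T \<in> borel_measurable borel"
    unfolding T_def by measurable
  have lborel_T: "lborel = density (distr lborel borel T) (\<lambda>_. ennreal (\<bar>c\<bar> ^ DIM(complex)))"
    unfolding T_def by (rule lborel_affine[OF \<open>c \<noteq> 0\<close>])
  have "AE z in lborel. g z = h z"
    using assms(4) unfolding gauss_eq_density by (subst (asm) AE_density) (auto simp: gauss_pdf_pos)
  then have "AE z in density (distr lborel borel T) (\<lambda>_. ennreal (\<bar>c\<bar> ^ DIM(complex))). g z = h z"
    by (subst (asm) lborel_T)
  then have "AE z in distr lborel borel T. g z = h z"
    by (subst (asm) AE_density) (auto simp: T_def \<open>c \<noteq> 0\<close>)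
  then have "AE y in lborel. g (T y) = h (T y)"
    by (subst (asm) AE_distr_iff) (auto simp: T_def)
  then have "AE y in gauss. g (T y) = h (T y)"
    unfolding gauss_eq_density by (subst AE_density) (auto elim!: eventually_mono)
  then show ?thesis
    unfolding mehler_def by (intro integral_cong_AE) (auto simp: T_def scaleR_conv_of_real)
qed

section \<open>Bounded continuous functions separate L^2(gamma)\<close>

lemma integrable_L2g:
  assumes "g \<in> L2g"
  shows "integrable gauss g"
proof (rule Bochner_Integration.integrable_bound)
  show "integrable gauss (\<lambda>x. 1 + (cmod (g x))\<^sup>2)"
    using assms by (auto simp: L2g_def)
  show "g \<in> borel_measurable gauss"
    using assms by (simp add: L2g_def)
  have "cmod z \<le> 1 + (cmod z)\<^sup>2" for z :: complex
  proof -
    have "0 \<le> (cmod z - 1)\<^sup>2"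
      by simp
    then show ?thesis
      using norm_ge_zero[of z] unfolding power2_eq_square left_diff_distrib right_diff_distrib by linarith
  qed
  then show "AE x in gauss. norm (g x) \<le> norm (1 + (cmod (g x))\<^sup>2)"
    by simp
qed

lemma bounded_borel_L2g:
  assumes "bounded_borel f"
  shows "f \<in> L2g"
proof -
  obtain B where B: "0 < B" "\<And>x. cmod (f x) \<le> B"
    using bounded_borel_normE[OF assms] by blast
  have [measurable]: "f \<in> borel_measurable borel"
    using assms by (rule bounded_borel_measurable)
  have "integrable gauss (\<lambda>x. (cmod (f x))\<^sup>2)"
    using B by (intro gauss.integrable_const_bound[where B = "B\<^sup>2"])
      (auto simp: measurable_gauss_iff intro!: power_mono)
  then show ?thesis
    by (simp add: L2g_def measurable_gauss_iff)
qed

lemma integrable_bounded_borel_mult_cnj: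
  assumes "bounded_borel \<psi>" and "integrable gauss g"
  shows "integrable gauss (\<lambda>x. \<psi> x * cnj (g x))"
proof -
  obtain B where "0 < B" "\<And>x. cmod (\<psi> x) \<le> B"
    using bounded_borel_normE[OF assms(1)] by blast
  then have "norm (\<psi> x * cnj (g x)) \<le> norm (B * cmod (g x))" for x
    by (simp add: norm_mult mult_right_mono)
  moreover have "(\<lambda>x. \<psi> x * cnj (g x)) \<in> borel_measurable gauss"
    using bounded_borel_measurable[OF assms(1)] borel_measurable_integrable[OF assms(2)]
    by (simp add: measurable_gauss_iff)
  moreover have "integrable gauss (\<lambda>x. B * cmod (g x))"
    using assms(2) by simp
  ultimately show ?thesis
    using Bochner_Integration.integrable_bound by (metis (mono_tags, lifting) AE_I2)
qed

lemma AE_eq_0_if_set_integral_open_eq_0: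
  fixes f :: "'a::topological_space \<Rightarrow> 'b::{banach, second_countable_topology}"
  assumes "sigma_finite_measure M" and sets: "sets M = sets borel" and f: "integrable M f"
    and open_0: "\<And>U. open U \<Longrightarrow> set_lebesgue_integral M U f = 0"
  shows "AE x in M. f x = 0"
proof (rule sigma_finite_measure.density_zero[OF assms(1) f])
  have set_integrable: "set_integrable M A f" if "A \<in> sets M" for A
    unfolding set_integrable_def using that f by (rule integrable_mult_indicator)
  have "Int_stable {S :: 'a set. open S}"
    by (auto simp: Int_stable_def)
  moreover have "{S :: 'a set. open S} \<subseteq> Pow UNIV"
    by simp
  moreover fix A assume "A \<in> sets M"
  then have "A \<in> sigma_sets UNIV {S. open S}"
    by (simp add: sets sets_borel)
  ultimately show "set_lebesgue_integral M A f = 0"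
  proof (induction rule: sigma_sets_induct_disjoint)
    case (compl A)
    then have "A \<in> sets M" "UNIV - A \<in> sets M"
      by (simp_all add: sets sets_borel sigma_sets.Compl)
    then have "set_lebesgue_integral M (A \<union> (UNIV - A)) f
        = set_lebesgue_integral M A f + set_lebesgue_integral M (UNIV - A) f"
      by (intro set_integral_Un set_integrable) auto
    moreover have "A \<union> (UNIV - A) = UNIV"
      by blast
    ultimately show ?case
      using compl.IH open_0[of UNIV] by simp
  next
    case (union A)
    then have "\<And>i. A i \<in> sets M"
      by (auto simp: sets sets_borel)
    then have "set_lebesgue_integral M (\<Union>i. A i) f = (\<Sum>i. set_lebesgue_integral M (A i) f)"
      using union.hyps(1)
      by (intro lebesgue_integral_countable_add set_integrable sets.countable_UN)
        (auto simp: disjoint_family_on_def)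
    then show ?case
      using union.IH by simp
  next
    case (basic A)
    then show ?case
      by (simp add: open_0)
  qed (simp add: set_lebesgue_integral_def)
qed

lemma Cb_approx_indicator_open:
  assumes "open U"
  obtains \<psi> :: "nat \<Rightarrow> complex \<Rightarrow> complex"
  where "\<And>n. \<psi> n \<in> Cb" "\<And>n x. cmod (\<psi> n x) \<le> 1"
    "\<And>x. (\<lambda>n. \<psi> n x) \<longlonglongrightarrow> indicator U x"
proof (cases "U = UNIV")
  case True
  show ?thesis
    by (rule that[of "\<lambda>_ _. 1"]) (auto simp: Cb_def True)
next
  case False
  define \<psi> where "\<psi> n x = complex_of_real (min 1 (real n * infdist x (- U)))" for n x
  show ?thesis
  proof (rule that[of \<psi>])
    show bound: "cmod (\<psi> n x) \<le> 1" for n x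
      using infdist_nonneg[of x "- U"] by (auto simp: \<psi>_def min_def)
    have "continuous_on UNIV (\<psi> n)" for n
      unfolding \<psi>_def by (intro continuous_intros)
    then show "\<psi> n \<in> Cb" for n
      using bound by (auto simp: Cb_def bounded_iff)
    fix x
    show "(\<lambda>n. \<psi> n x) \<longlonglongrightarrow> indicator U x"
    proof (cases "x \<in> U")
      case True
      then have "0 < infdist x (- U)"
        using \<open>open U\<close> False by (intro infdist_pos_not_in_closed) auto
      then have "LIM n sequentially. real n * infdist x (- U) :> at_top"
        by (intro filterlim_at_top_mult_tendsto_pos[OF tendsto_const] filterlim_real_sequentially)
      then have "\<forall>\<^sub>F n in sequentially. \<psi> n x = indicator U x"
        unfolding filterlim_at_top by (auto simp: \<psi>_def True elim!: allE[of _ 1] eventually_mono)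
      then show ?thesis
        by (rule tendsto_eventually)
    qed (simp add: \<psi>_def)
  qed
qed

lemma set_integral_open_eq_0_if_Cb_orthogonal:
  assumes int_k: "integrable gauss k" and orth: "\<And>\<psi>. \<psi> \<in> Cb \<Longrightarrow> (\<integral>x. \<psi> x * k x \<partial>gauss) = 0"
    and "open U"
  shows "set_lebesgue_integral gauss U k = 0"
proof -
  obtain \<psi> where \<psi>: "\<And>n. \<psi> n \<in> Cb" "\<And>n x. cmod (\<psi> n x) \<le> 1"
    "\<And>x. (\<lambda>n. \<psi> n x) \<longlonglongrightarrow> indicator U x"
    using Cb_approx_indicator_open[OF \<open>open U\<close>] by blast
  have [measurable]: "k \<in> borel_measurable borel" "U \<in> sets borel"
    using borel_measurable_integrable[OF int_k] \<open>open U\<close> by (simp_all add: measurable_gauss_iff)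
  have "(\<lambda>n. \<integral>x. \<psi> n x * k x \<partial>gauss) \<longlonglongrightarrow> (\<integral>x. indicator U x * k x \<partial>gauss)"
  proof (rule integral_dominated_convergence[where w = "\<lambda>x. cmod (k x)"])
    show "AE x in gauss. norm (\<psi> n x * k x) \<le> cmod (k x)" for n
      using \<psi>(2) by (intro AE_I2) (simp add: norm_mult mult_left_le_one_le)
    show "AE x in gauss. (\<lambda>n. \<psi> n x * k x) \<longlonglongrightarrow> indicator U x * k x"
      using \<psi>(3) by (intro AE_I2 tendsto_mult tendsto_const)
    show "(\<lambda>x. \<psi> n x * k x) \<in> borel_measurable gauss" for n
      using bounded_borel_measurable[OF Cb_bounded_borel[OF \<psi>(1)]]
      by (simp add: measurable_gauss_iff)
  qed (use int_k in \<open>simp_all add: measurable_gauss_iff\<close>)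
  moreover have "(\<lambda>n. \<integral>x. \<psi> n x * k x \<partial>gauss) = (\<lambda>n. 0)"
    using orth[OF \<psi>(1)] by simp
  ultimately have "(\<integral>x. indicator U x * k x \<partial>gauss) = 0"
    using LIMSEQ_unique tendsto_const by metis
  then show ?thesis
    by (simp add: set_lebesgue_integral_def scaleR_conv_of_real of_real_indicator)
qed

lemma L2g_AE_eq_if_inner_Cb_eq:
  assumes g: "g \<in> L2g" and h: "h \<in> L2g"
    and inner_eq: "\<And>\<psi>. \<psi> \<in> Cb \<Longrightarrow> inner_g \<psi> g = inner_g \<psi> h"
  shows "AE x in gauss. g x = h x"
proof -
  define k where "k x = cnj (g x - h x)" for x
  have int_k: "integrable gauss k"
    using integrable_L2g[OF g] integrable_L2g[OF h] by (simp add: k_def[abs_def])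
  have "(\<integral>x. \<psi> x * k x \<partial>gauss) = 0" if "\<psi> \<in> Cb" for \<psi>
  proof -
    have "(\<integral>x. \<psi> x * k x \<partial>gauss) = inner_g \<psi> g - inner_g \<psi> h"
      unfolding inner_g_def k_def
      using integrable_bounded_borel_mult_cnj[OF Cb_bounded_borel[OF that] integrable_L2g, OF g]
        integrable_bounded_borel_mult_cnj[OF Cb_bounded_borel[OF that] integrable_L2g, OF h]
      by (simp add: algebra_simps)
    then show ?thesis
      using inner_eq[OF that] by simp
  qed
  then have "AE x in gauss. k x = 0"
    using int_k set_integral_open_eq_0_if_Cb_orthogonal
    by (intro AE_eq_0_if_set_integral_open_eq_0) (simp_all add: gauss.sigma_finite_measure_axioms)
  then show ?thesis
    by (rule eventually_mono) (simp add: k_def)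
qed

section \<open>The complex Ornstein-Uhlenbeck semigroup\<close>

lemma OU_adj_AE_eq_mehler_cnj:
  assumes OU: "OU \<theta> t = mehler a c" and ac: "(cmod a)\<^sup>2 + c\<^sup>2 = 1" and \<phi>: "bounded_borel \<phi>"
  shows "OU_adj \<theta> t \<phi> \<in> L2g" "AE x in gauss. OU_adj \<theta> t \<phi> x = mehler (cnj a) c \<phi> x"
proof -
  let ?is_adj = "\<lambda>g. g \<in> L2g \<and> (\<forall>\<psi>\<in>Cb. inner_g (OU \<theta> t \<psi>) \<phi> = inner_g \<psi> g)"
  have mehler_adj: "?is_adj (mehler (cnj a) c \<phi>)"
    using bounded_borel_L2g[OF bounded_borel_mehler[OF \<phi>]] mehler_adjoint[OF Cb_bounded_borel \<phi> ac]
    by (simp add: OU)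
  then have adj: "?is_adj (OU_adj \<theta> t \<phi>)"
    unfolding OU_adj_def by (rule someI[of ?is_adj])
  then show "OU_adj \<theta> t \<phi> \<in> L2g"
    by blast
  show "AE x in gauss. OU_adj \<theta> t \<phi> x = mehler (cnj a) c \<phi> x"
    using adj mehler_adj by (intro L2g_AE_eq_if_inner_Cb_eq) auto
qed

lemma OU_OU_adj_commute_AE:
  assumes OU: "OU \<theta> t = mehler a c" and ac: "(cmod a)\<^sup>2 + c\<^sup>2 = 1" and "c \<noteq> 0"
    and \<phi>: "bounded_borel \<phi>"
  shows "AE x in gauss. OU \<theta> t (OU_adj \<theta> t \<phi>) x = OU_adj \<theta> t (OU \<theta> t \<phi>) x"
proof -
  have "OU \<theta> t (OU_adj \<theta> t \<phi>) x = mehler (cnj a) c (mehler a c \<phi>) x" for x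
  proof -
    have "OU \<theta> t (OU_adj \<theta> t \<phi>) x = mehler a c (mehler (cnj a) c \<phi>) x"
      unfolding OU using OU_adj_AE_eq_mehler_cnj[OF OU ac \<phi>] \<open>c \<noteq> 0\<close> bounded_borel_measurable[OF \<phi>]
      by (intro mehler_cong_AE) (auto simp: L2g_def measurable_gauss_iff)
    also have "\<dots> = mehler (cnj a) c (mehler a c \<phi>) x"
      by (rule mehler_mehler_cnj_commute[OF \<phi>])
    finally show ?thesis .
  qed
  moreover have "AE x in gauss. OU_adj \<theta> t (OU \<theta> t \<phi>) x = mehler (cnj a) c (mehler a c \<phi>) x"
    using OU_adj_AE_eq_mehler_cnj(2)[OF OU ac bounded_borel_mehler[OF \<phi>]] by (simp add: OU)
  ultimately show ?thesis
    by (simp add: eq_commute)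
qed

lemma OU_0: "OU \<theta> 0 f = f"
  using gauss.prob_space by (simp add: fun_eq_iff OU_def)

theorem proposition3p3:
  fixes \<theta> t :: real and \<phi> :: "complex \<Rightarrow> complex"
  assumes "- (pi / 2) < \<theta>" and "\<theta> < pi / 2" and "0 \<le> t" and "\<phi> \<in> Cb"
  shows "(AE x in gauss. OU \<theta> t (OU_adj \<theta> t \<phi>) x = OU_adj \<theta> t (OU \<theta> t \<phi>) x)
       \<and> (AE x in gauss. OU_adj \<theta> t \<phi> x = OU (- \<theta>) t \<phi> x)"
proof -
  define a where "a = exp (- (cis \<theta> * complex_of_real t))"
  define c where "c = sqrt (1 - exp (- 2 * t * cos \<theta>))"
  have OU: "OU \<theta> t = mehler a c" and OU_neg: "OU (- \<theta>) t = mehler (cnj a) c"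
    by (simp_all add: OU_eq_mehler a_def c_def exp_cnj cis_cnj)
  have "0 < cos \<theta>"
    using assms(1,2) by (rule cos_gt_zero_pi)
  then have ac: "(cmod a)\<^sup>2 + c\<^sup>2 = 1"
    using \<open>0 \<le> t\<close> by (simp add: a_def c_def norm_exp_eq_Re power2_eq_square flip: exp_add)
  have \<phi>: "bounded_borel \<phi>"
    using Cb_bounded_borel[OF assms(4)] .
  have "AE x in gauss. OU \<theta> t (OU_adj \<theta> t \<phi>) x = OU_adj \<theta> t (OU \<theta> t \<phi>) x"
  proof (cases "t = 0")
    case False
    then have "c \<noteq> 0"
      using \<open>0 \<le> t\<close> \<open>0 < cos \<theta>\<close> by (simp add: c_def)
    then show ?thesis
      by (rule OU_OU_adj_commute_AE[OF OU ac _ \<phi>])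
  qed (simp add: OU_0)
  then show ?thesis
    using OU_adj_AE_eq_mehler_cnj(2)[OF OU ac \<phi>] by (simp add: OU_neg)
qed

end
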